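(* Let $p/q$ be an even rational parameter, $\omega=p+q$, $P=2p/\omega$. Let $\Lambda_P\subset\mathbb R^3$ be the lattice generated by $(2,P,P)$, $(0,2,0)$, $(0,0,2)$, let $\mathcal C=\{(m+\tfrac12,n+\tfrac12): m,n\in\mathbb Z\}$, let $L\subset\mathbb Z^2$ be the lattice generated by $(\omega^2,0)$ and $(0,\omega)$, and let $\mathcal X=\frac{\mathbb Z_1}{\omega}\times\frac{\mathbb Z_0}{\omega}\times\frac{\mathbb Z_0}{\omega}\subset\mathbb R^3$, where $\mathbb Z_0$ and $\mathbb Z_1$ are the even and the odd integers. Define $\Xi:\mathbb R^2\to\mathbb R^3/\Lambda_P$ by $\Xi(x,y)=(2Px+2y,\,2Px,\,2Px+2Py)\bmod\Lambda_P$. Then $\Xi$ induces a well-defined map $\mathcal C/L\to\mathcal X/\Lambda_P$, and this map is a bijection.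
   Context: An even rational parameter is a rational $p/q\in(0,1)$, with $p,q$ positive coprime integers, such that $pq$ is even. Note $\Lambda_P$ preserves $\mathcal X$. *)

theory Defs
  imports "HOL-Analysis.Analysis"
begin

definition even_rational_param :: "nat \<Rightarrow> nat \<Rightarrow> bool" where
  "even_rational_param p q \<longleftrightarrow> 0 < p \<and> p < q \<and> coprime p q \<and> even (p * q)"

definition LambdaP :: "real \<Rightarrow> (real \<times> real \<times> real) set" where
  "LambdaP P = {(2 * of_int a, P * of_int a + 2 * of_int b, P * of_int a + 2 * of_int c)
                 | a b c :: int. True}"

definition halfC :: "(real \<times> real) set" where
  "halfC = {(of_int m + 1/2, of_int n + 1/2) | m n :: int. True}"

definition latL :: "nat \<Rightarrow> (real \<times> real) set" where
  "latL w = {(real w ^ 2 * of_int a, real w * of_int b) | a b :: int. True}"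

definition setX :: "nat \<Rightarrow> (real \<times> real \<times> real) set" where
  "setX w = {(of_int a / real w, of_int b / real w, of_int c / real w)
              | a b c :: int. odd a \<and> even b \<and> even c}"

definition Xi :: "real \<Rightarrow> real \<times> real \<Rightarrow> real \<times> real \<times> real" where
  "Xi P z = (2 * P * fst z + 2 * snd z, 2 * P * fst z, 2 * P * fst z + 2 * P * snd z)"

definition relC :: "nat \<Rightarrow> ((real \<times> real) \<times> (real \<times> real)) set" where
  "relC w = {(u, v). u \<in> halfC \<and> v \<in> halfC \<and> u - v \<in> latL w}"

definition relX :: "nat \<Rightarrow> real \<Rightarrow> ((real \<times> real \<times> real) \<times> (real \<times> real \<times> real)) set" where
  "relX w P = {(u, v). u \<in> setX w \<and> v \<in> setX w \<and> u - v \<in> LambdaP P}"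

text \<open>Induced map on classes: a class A in C/L goes to the class of X/Lambda_P
  containing the images Xi(c), c in A.\<close>
definition XiBar :: "nat \<Rightarrow> real \<Rightarrow> (real \<times> real) set \<Rightarrow> (real \<times> real \<times> real) set" where
  "XiBar w P A = {x \<in> setX w. \<exists>c\<in>A. Xi P c - x \<in> LambdaP P}"

end

theory Submission
  imports Defs
begin

text \<open>
  For c = (m + 1/2, n + 1/2) one has Xi(c) = (1,0,0) + (2/w) (2pm + p + wn, 2pm + p, 2p(m + n + 1)).
  Since w is odd, X is exactly (1,0,0) + (2/w) Z^3, and in these integer coordinates Lambda_P
  becomes the lattice of the vectors (wa, pa + wb, pa + wc).  Injectivity modulo L is then a
  divisibility argument using gcd(2p, w) = 1.  Surjectivity says that this lattice together
  with the difference vectors (2p, 2p, 2p) and (w, 0, 2p) of the integer map spans Z^3, which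
  follows from Bezout identities for (2p)^2, p and 2p against w.  The bijection of classes is a
  general fact about a map between two sets that reflects and preserves the equivalences and is
  onto up to equivalence.
\<close>

lemma equiv_diff_rel:
  fixes G :: "'a::ab_group_add set"
  assumes "0 \<in> G" and "\<And>x y. x \<in> G \<Longrightarrow> y \<in> G \<Longrightarrow> x + y \<in> G" and "\<And>x. x \<in> G \<Longrightarrow> - x \<in> G"
  shows "equiv A {(u, v). u \<in> A \<and> v \<in> A \<and> u - v \<in> G}"
proof (rule equivI)
  show "sym {(u, v). u \<in> A \<and> v \<in> A \<and> u - v \<in> G}"
  proof (rule symI, clarsimp)
    fix x y assume "x - y \<in> G"
    then have "- (x - y) \<in> G" using assms(3) by blast
    then show "y - x \<in> G" by simp
  qed
  show "trans {(u, v). u \<in> A \<and> v \<in> A \<and> u - v \<in> G}"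
  proof (rule transI, clarsimp)
    fix x y z assume "x - y \<in> G" "y - z \<in> G"
    then have "(x - y) + (y - z) \<in> G" using assms(2) by blast
    then show "x - z \<in> G" by simp
  qed
qed (use assms(1) in \<open>auto simp: refl_on_def\<close>)

lemma bij_betw_quotient_Image:
  assumes r: "equiv A r" and s: "equiv B s"
    and maps: "f ` A \<subseteq> B"
    and resp: "\<And>x y. x \<in> A \<Longrightarrow> y \<in> A \<Longrightarrow> (f x, f y) \<in> s \<longleftrightarrow> (x, y) \<in> r"
    and onto: "\<And>b. b \<in> B \<Longrightarrow> \<exists>a\<in>A. (f a, b) \<in> s"
  shows "bij_betw (\<lambda>X. s `` (f ` X)) (A // r) (B // s)"
proof -
  have image_class: "s `` (f ` (r `` {a})) = s `` {f a}" if "a \<in> A" for a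
  proof
    show "s `` (f ` (r `` {a})) \<subseteq> s `` {f a}"
    proof
      fix y assume "y \<in> s `` (f ` (r `` {a}))"
      then obtain x where "(a, x) \<in> r" "(f x, y) \<in> s" by blast
      moreover from this(1) have "(f a, f x) \<in> s"
        using resp that r by (meson equiv_class_eq_iff)
      ultimately show "y \<in> s `` {f a}"
        using s by (meson Image_singleton_iff equiv_def transD)
    qed
    show "s `` {f a} \<subseteq> s `` (f ` (r `` {a}))"
      using r that by (auto simp: equiv_def refl_on_def)
  qed
  have "inj_on (\<lambda>X. s `` (f ` X)) (A // r)"
  proof (rule inj_onI)
    fix X Y assume "X \<in> A // r" "Y \<in> A // r" and eq: "s `` (f ` X) = s `` (f ` Y)"
    then obtain x y where X: "X = r `` {x}" "x \<in> A" and Y: "Y = r `` {y}" "y \<in> A"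
      by (auto elim!: quotientE)
    have "s `` {f x} = s `` {f y}" using eq X Y image_class by simp
    then have "(f x, f y) \<in> s" using s maps X Y by (simp add: eq_equiv_class_iff image_subset_iff)
    then show "X = Y" using X Y resp r by (simp add: equiv_class_eq)
  qed
  moreover have "(\<lambda>X. s `` (f ` X)) ` (A // r) = B // s"
  proof
    show "(\<lambda>X. s `` (f ` X)) ` (A // r) \<subseteq> B // s"
      using image_class maps by (auto elim!: quotientE intro!: quotientI)
    show "B // s \<subseteq> (\<lambda>X. s `` (f ` X)) ` (A // r)"
    proof
      fix Y assume "Y \<in> B // s"
      then obtain b where Y: "Y = s `` {b}" "b \<in> B" by (rule quotientE)
      then obtain a where a: "a \<in> A" "(f a, b) \<in> s" using onto by blast
      then have "Y = s `` (f ` (r `` {a}))" using Y s image_class by (simp add: equiv_class_eq)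
      then show "Y \<in> (\<lambda>X. s `` (f ` X)) ` (A // r)" using a by (blast intro: quotientI)
    qed
  qed
  ultimately show ?thesis by (simp add: bij_betw_def)
qed

lemma LambdaP_zero: "0 \<in> LambdaP P"
  unfolding LambdaP_def zero_prod_def by force

lemma LambdaP_add:
  assumes "u \<in> LambdaP P" "v \<in> LambdaP P" shows "u + v \<in> LambdaP P"
proof -
  obtain a b c a' b' c' :: int
    where "u = (2 * of_int a, P * of_int a + 2 * of_int b, P * of_int a + 2 * of_int c)"
      and "v = (2 * of_int a', P * of_int a' + 2 * of_int b', P * of_int a' + 2 * of_int c')"
    using assms unfolding LambdaP_def by blast
  then show ?thesis
    unfolding LambdaP_def by (intro CollectI exI[of _ "a + a'"] exI[of _ "b + b'"] exI[of _ "c + c'"])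
      (simp add: algebra_simps)
qed

lemma LambdaP_uminus:
  assumes "u \<in> LambdaP P" shows "- u \<in> LambdaP P"
proof -
  obtain a b c :: int
    where "u = (2 * of_int a, P * of_int a + 2 * of_int b, P * of_int a + 2 * of_int c)"
    using assms unfolding LambdaP_def by blast
  then show ?thesis
    unfolding LambdaP_def by (intro CollectI exI[of _ "- a"] exI[of _ "- b"] exI[of _ "- c"]) simp
qed

lemma latL_zero: "0 \<in> latL w"
  unfolding latL_def zero_prod_def by force

lemma latL_add:
  assumes "u \<in> latL w" "v \<in> latL w" shows "u + v \<in> latL w"
proof -
  obtain a b a' b' :: int
    where "u = (real w ^ 2 * of_int a, real w * of_int b)" "v = (real w ^ 2 * of_int a', real w * of_int b')"
    using assms unfolding latL_def by blast
  then show ?thesis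
    unfolding latL_def by (intro CollectI exI[of _ "a + a'"] exI[of _ "b + b'"]) (simp add: algebra_simps)
qed

lemma latL_uminus:
  assumes "u \<in> latL w" shows "- u \<in> latL w"
proof -
  obtain a b :: int where "u = (real w ^ 2 * of_int a, real w * of_int b)"
    using assms unfolding latL_def by blast
  then show ?thesis
    unfolding latL_def by (intro CollectI exI[of _ "- a"] exI[of _ "- b"]) simp
qed

lemma equiv_relC: "equiv halfC (relC w)"
  unfolding relC_def by (rule equiv_diff_rel[OF latL_zero latL_add latL_uminus])

lemma equiv_relX: "equiv (setX w) (relX w P)"
  unfolding relX_def by (rule equiv_diff_rel[OF LambdaP_zero LambdaP_add LambdaP_uminus])

text \<open>The lattice (w/2) Lambda_P for P = 2p/w.\<close>

definition Lambda_int :: "int \<Rightarrow> int \<Rightarrow> (int \<times> int \<times> int) set" where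
  "Lambda_int p w = {(w * a, p * a + w * b, p * a + w * c) | a b c. True}"

definition X_point :: "nat \<Rightarrow> int \<times> int \<times> int \<Rightarrow> real \<times> real \<times> real" where
  "X_point w = (\<lambda>(a, b, c). (1 + 2 * of_int a / real w, 2 * of_int b / real w, 2 * of_int c / real w))"

definition Xi_int :: "int \<Rightarrow> int \<Rightarrow> int \<Rightarrow> int \<Rightarrow> int \<times> int \<times> int" where
  "Xi_int p w m n = (2 * p * m + p + w * n, 2 * p * m + p, 2 * p * (m + n + 1))"

lemma scaled_in_LambdaP_iff:
  fixes X Y Z :: int
  assumes "w > 0"
  shows "(2 * of_int X / real w, 2 * of_int Y / real w, 2 * of_int Z / real w) \<in> LambdaP (2 * real p / real w)
     \<longleftrightarrow> (X, Y, Z) \<in> Lambda_int (int p) (int w)"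
proof -
  have "real w \<noteq> 0" using assms by simp
  then have "(2 * of_int X / real w = 2 * of_int a \<and>
        2 * of_int Y / real w = 2 * real p / real w * of_int a + 2 * of_int b \<and>
        2 * of_int Z / real w = 2 * real p / real w * of_int a + 2 * of_int c)
     \<longleftrightarrow> (real_of_int X = of_int (int w * a) \<and> real_of_int Y = of_int (int p * a + int w * b) \<and>
          real_of_int Z = of_int (int p * a + int w * c))" for a b c
    by (auto simp: field_simps)
  then show ?thesis
    unfolding LambdaP_def Lambda_int_def of_int_eq_iff by auto
qed

lemma X_point_diff_in_LambdaP_iff:
  assumes "w > 0"
  shows "X_point w u - X_point w v \<in> LambdaP (2 * real p / real w) \<longleftrightarrow> u - v \<in> Lambda_int (int p) (int w)"
proof -
  obtain a b c a' b' c' where "u = (a, b, c)" "v = (a', b', c')" by (cases u, cases v)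
  then show ?thesis
    using scaled_in_LambdaP_iff[OF assms, of "a - a'" "b - b'" "c - c'" p]
    by (simp add: X_point_def diff_divide_distrib right_diff_distrib)
qed

lemma setX_eq_range_X_point:
  assumes "odd w"
  shows "setX w = range (X_point w)"
proof
  have "w \<noteq> 0" using assms by (rule odd_pos[THEN gr_implies_not0])
  show "setX w \<subseteq> range (X_point w)"
  proof
    fix x assume "x \<in> setX w"
    then obtain a b c :: int where x: "x = (of_int a / real w, of_int b / real w, of_int c / real w)"
      and "odd a" "even b" "even c" unfolding setX_def by blast
    moreover have "even (a - int w)" using assms \<open>odd a\<close> by simp
    then obtain k where "a - int w = 2 * k" by (rule evenE)
    then have "a = int w + 2 * k" by simp
    ultimately have "x = X_point w (k, b div 2, c div 2)"
      using \<open>w \<noteq> 0\<close> by (auto simp: X_point_def field_simps elim!: evenE)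
    then show "x \<in> range (X_point w)" by blast
  qed
  show "range (X_point w) \<subseteq> setX w"
  proof (rule image_subsetI)
    fix u :: "int \<times> int \<times> int"
    obtain a b c where u: "u = (a, b, c)" by (cases u)
    have "X_point w u = (of_int (int w + 2 * a) / real w, of_int (2 * b) / real w, of_int (2 * c) / real w)"
      using \<open>w \<noteq> 0\<close> by (simp add: u X_point_def field_simps)
    moreover have "odd (int w + 2 * a)" "even (2 * b)" "even (2 * c)" using assms by simp_all
    ultimately show "X_point w u \<in> setX w"
      unfolding setX_def by blast
  qed
qed

lemma Xi_half_point:
  assumes "w > 0"
  shows "Xi (2 * real p / real w) (of_int m + 1/2, of_int n + 1/2) = X_point w (Xi_int (int p) (int w) m n)"
  using assms by (simp add: Xi_def X_point_def Xi_int_def field_simps)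

lemma latL_of_int_iff:
  "(of_int M, of_int N) \<in> latL w \<longleftrightarrow> int w ^ 2 dvd M \<and> int w dvd N"
proof -
  have "(of_int M, of_int N) \<in> latL w \<longleftrightarrow>
      (\<exists>A B. real_of_int M = of_int (int w ^ 2 * A) \<and> real_of_int N = of_int (int w * B))"
    unfolding latL_def by auto
  then show ?thesis unfolding of_int_eq_iff dvd_def by blast
qed

lemma Xi_int_diff:
  "Xi_int p w m n - Xi_int p w m' n' =
     (2 * p * (m - m') + w * (n - n'), 2 * p * (m - m'), 2 * p * ((m - m') + (n - n')))"
  by (simp add: Xi_int_def algebra_simps)

lemma Xi_int_difference_in_Lambda_int_iff:
  fixes p w M N :: int
  assumes cop: "coprime p w" and "odd w" and "p \<noteq> 0"
  shows "(2 * p * M + w * N, 2 * p * M, 2 * p * (M + N)) \<in> Lambda_int p w \<longleftrightarrow> w\<^sup>2 dvd M \<and> w dvd N"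
proof
  have cop2: "coprime w (2 * p)"
    using assms by (simp add: coprime_commute coprime_mult_right_iff)
  then have cop4: "coprime w (2 * (2 * p))"
    using \<open>odd w\<close> by (subst coprime_mult_right_iff) simp
  have "w \<noteq> 0" using \<open>odd w\<close> by auto
  assume "(2 * p * M + w * N, 2 * p * M, 2 * p * (M + N)) \<in> Lambda_int p w"
  then obtain a b c
    where "(2 * p * M + w * N, 2 * p * M, 2 * p * (M + N)) = (w * a, p * a + w * b, p * a + w * c)"
    unfolding Lambda_int_def by blast
  then have a: "w * a = 2 * p * M + w * N" and b: "p * a + w * b = 2 * p * M"
    and c: "p * a + w * c = 2 * p * (M + N)" by simp_all
  have "2 * p * M = w * (a - N)" using a by (simp add: algebra_simps)
  then have "w dvd (2 * p) * M" by (simp only: dvd_triv_left)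
  then obtain M1 where M1: "M = w * M1" using cop2 by (auto simp: coprime_dvd_mult_right_iff)
  have "w * b = p * (2 * w * M1 - a)" using b M1 by (simp add: algebra_simps)
  then have "p dvd w * b" by (simp only: dvd_triv_left)
  then obtain b1 where "b = p * b1" using cop by (auto simp: coprime_dvd_mult_right_iff coprime_commute)
  with b M1 have "p * (a + w * b1) = p * (2 * w * M1)" by (simp add: algebra_simps)
  then have "a + w * b1 = 2 * w * M1" using \<open>p \<noteq> 0\<close> by simp
  then have a_eq: "a = w * (2 * M1 - b1)" by (simp add: algebra_simps)
  from a M1 have "w * a = w * (2 * p * M1 + N)" by (simp add: algebra_simps)
  then have N_eq: "N = a - 2 * p * M1" using \<open>w \<noteq> 0\<close> by simp
  have "w * c = p * (2 * (M + N) - a)" using c by (simp add: algebra_simps)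
  then have "p dvd w * c" by (simp only: dvd_triv_left)
  then obtain c1 where "c = p * c1" using cop by (auto simp: coprime_dvd_mult_right_iff coprime_commute)
  with c have "p * (a + w * c1) = p * (2 * (M + N))" by (simp add: algebra_simps)
  then have "a + w * c1 = 2 * (M + N)" using \<open>p \<noteq> 0\<close> by simp
  with M1 N_eq a_eq have "(2 * (2 * p)) * M1 = w * (4 * M1 - b1 - c1)" by (simp add: algebra_simps)
  then have "w dvd (2 * (2 * p)) * M1" by simp
  then obtain M2 where "M1 = w * M2" using cop4 by (auto simp: coprime_dvd_mult_right_iff)
  with M1 N_eq a_eq show "w\<^sup>2 dvd M \<and> w dvd N"
    by (simp add: power2_eq_square right_diff_distrib)
next
  assume "w\<^sup>2 dvd M \<and> w dvd N"
  then obtain A B where "M = w\<^sup>2 * A" "N = w * B" by (auto elim!: dvdE)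
  then show "(2 * p * M + w * N, 2 * p * M, 2 * p * (M + N)) \<in> Lambda_int p w"
    unfolding Lambda_int_def
    by (intro CollectI exI[of _ "2 * p * w * A + w * B"] exI[of _ "2 * p * (w - p) * A - p * B"]
        exI[of _ "2 * p * (w - p) * A + p * B"]) (simp add: algebra_simps power2_eq_square)
qed

text \<open>Lambda_int p w plus the span of the differences (2p, 2p, 2p) and (w, 0, 2p) of values of Xi_int.\<close>

definition Xi_int_lattice :: "int \<Rightarrow> int \<Rightarrow> (int \<times> int \<times> int) set" where
  "Xi_int_lattice p w =
     {(2 * p * m + w * n + w * a, 2 * p * m + p * a + w * b, 2 * p * (m + n) + p * a + w * c) | m n a b c. True}"

lemma Xi_int_lattice_lincomb:
  assumes "(X, Y, Z) \<in> Xi_int_lattice p w" "(X', Y', Z') \<in> Xi_int_lattice p w"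
  shows "(i * X + j * X', i * Y + j * Y', i * Z + j * Z') \<in> Xi_int_lattice p w"
proof -
  obtain m n a b c m' n' a' b' c' where
    "(X, Y, Z) = (2 * p * m + w * n + w * a, 2 * p * m + p * a + w * b, 2 * p * (m + n) + p * a + w * c)"
    "(X', Y', Z') = (2 * p * m' + w * n' + w * a', 2 * p * m' + p * a' + w * b', 2 * p * (m' + n') + p * a' + w * c')"
    using assms unfolding Xi_int_lattice_def by blast
  then show ?thesis
    unfolding Xi_int_lattice_def
    by (intro CollectI exI[of _ "i * m + j * m'"] exI[of _ "i * n + j * n'"] exI[of _ "i * a + j * a'"]
        exI[of _ "i * b + j * b'"] exI[of _ "i * c + j * c'"]) (simp add: algebra_simps)
qed

lemma Xi_int_lattice_UNIV:
  fixes p w :: int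
  assumes "coprime p w" and "odd w"
  shows "Xi_int_lattice p w = UNIV"
proof -
  let ?S = "Xi_int_lattice p w"
  note lincomb = Xi_int_lattice_lincomb
  have cop2: "coprime (2 * p) w"
    using assms by (simp add: coprime_mult_left_iff)
  then have "coprime ((2 * p)\<^sup>2) w" by (simp only: coprime_power_left_iff simp_thms)
  then obtain s t where st: "s * (2 * p)\<^sup>2 + t * w = 1"
    by (metis bezout_int coprime_iff_gcd_eq_1)
  have e3: "(0, 0, 1) \<in> ?S"
    unfolding Xi_int_lattice_def
    by (intro CollectI exI[of _ "- s * w"] exI[of _ "2 * p * s"] exI[of _ 0] exI[of _ "2 * p * s"]
        exI[of _ "t + 2 * p * s"]) (use st in \<open>simp add: algebra_simps power2_eq_square\<close>)
  have "(0, p, - p) \<in> ?S"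
    unfolding Xi_int_lattice_def
    by (intro CollectI exI[of _ 0] exI[of _ "-1"] exI[of _ 1] exI[of _ 0] exI[of _ 0]) simp
  from lincomb[OF this e3, of 1 p] have p_e2: "(0, p, 0) \<in> ?S" by simp
  have w_e2: "(0, w, 0) \<in> ?S"
    unfolding Xi_int_lattice_def
    by (intro CollectI exI[of _ 0] exI[of _ 0] exI[of _ 0] exI[of _ 1] exI[of _ 0]) simp
  obtain s1 t1 where "s1 * p + t1 * w = 1" using assms(1) by (metis bezout_int coprime_iff_gcd_eq_1)
  with lincomb[OF p_e2 w_e2, of s1 t1] have e2: "(0, 1, 0) \<in> ?S" by simp
  have "(2 * p, 2 * p, 2 * p) \<in> ?S"
    unfolding Xi_int_lattice_def
    by (intro CollectI exI[of _ 1] exI[of _ 0] exI[of _ 0] exI[of _ 0] exI[of _ 0]) simp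
  from lincomb[OF lincomb[OF this e2, of 1 "- 2 * p"] e3, of 1 "- 2 * p"]
  have p_e1: "(2 * p, 0, 0) \<in> ?S" by simp
  have "(w, 0, 2 * p) \<in> ?S"
    unfolding Xi_int_lattice_def
    by (intro CollectI exI[of _ 0] exI[of _ 1] exI[of _ 0] exI[of _ 0] exI[of _ 0]) simp
  from lincomb[OF this e3, of 1 "- 2 * p"] have w_e1: "(w, 0, 0) \<in> ?S" by simp
  obtain s2 t2 where "s2 * (2 * p) + t2 * w = 1" using cop2 by (metis bezout_int coprime_iff_gcd_eq_1)
  with lincomb[OF p_e1 w_e1, of s2 t2] have e1: "(1, 0, 0) \<in> ?S" by simp
  have "(X, Y, Z) \<in> ?S" for X Y Z
    using lincomb[OF lincomb[OF e1 e2, of X Y] e3, of 1 Z] by simp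
  then show ?thesis by auto
qed

lemma Xi_int_covers:
  fixes p w :: int
  assumes "coprime p w" and "odd w"
  obtains m n where "Xi_int p w m n - u \<in> Lambda_int p w"
proof -
  obtain X Y Z where u: "u = (X, Y, Z)" by (cases u)
  have "(X - p, Y - p, Z - 2 * p) \<in> Xi_int_lattice p w"
    using Xi_int_lattice_UNIV[OF assms] by simp
  then obtain m n a b c where
    "(X - p, Y - p, Z - 2 * p) = (2 * p * m + w * n + w * a, 2 * p * m + p * a + w * b, 2 * p * (m + n) + p * a + w * c)"
    unfolding Xi_int_lattice_def by blast
  then have "Xi_int p w m n - u = (w * - a, p * - a + w * - b, p * - a + w * - c)"
    by (simp add: u Xi_int_def algebra_simps)
  then show ?thesis
    using that unfolding Lambda_int_def by blast
qed

lemma even_rational_param_odd_coprime: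
  assumes "even_rational_param p q"
  shows "odd (p + q)" and "coprime p (p + q)"
proof -
  have "coprime p q" "even (p * q)" using assms unfolding even_rational_param_def by auto
  then show "odd (p + q)" by auto
  show "coprime p (p + q)"
    using \<open>coprime p q\<close> by (simp add: coprime_iff_gcd_eq_1)
qed

lemma halfC_cases:
  assumes "c \<in> halfC"
  obtains m n :: int where "c = (of_int m + 1/2, of_int n + 1/2)"
  using assms unfolding halfC_def by blast

lemma Xi_halfC_subset_setX:
  assumes "odd w"
  shows "Xi (2 * real p / real w) ` halfC \<subseteq> setX w"
  using assms by (auto simp: setX_eq_range_X_point Xi_half_point odd_pos elim!: halfC_cases)

lemma XiBar_eq_Image:
  assumes "odd w" and "A \<in> halfC // relC w"
  shows "XiBar w (2 * real p / real w) A = relX w (2 * real p / real w) `` (Xi (2 * real p / real w) ` A)"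
proof -
  have "Xi (2 * real p / real w) ` A \<subseteq> setX w"
    using Xi_halfC_subset_setX[OF assms(1)] in_quotient_imp_subset[OF equiv_relC assms(2)] by blast
  then show ?thesis unfolding XiBar_def relX_def by auto
qed

context
  fixes p w :: nat
  assumes p_pos: "p > 0" and cop: "coprime (int p) (int w)" and odd: "odd w"
begin

lemma Xi_diff_in_LambdaP_iff:
  assumes "c \<in> halfC" "c' \<in> halfC"
  shows "Xi (2 * real p / real w) c - Xi (2 * real p / real w) c' \<in> LambdaP (2 * real p / real w)
     \<longleftrightarrow> c - c' \<in> latL w"
proof -
  obtain m n m' n' where c: "c = (of_int m + 1/2, of_int n + 1/2)"
    and c': "c' = (of_int m' + 1/2, of_int n' + 1/2)"
    using assms by (auto elim!: halfC_cases)
  have diff: "c - c' = (of_int (m - m'), of_int (n - n'))" by (simp add: c c')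
  show ?thesis
    unfolding diff latL_of_int_iff
    using Xi_int_difference_in_Lambda_int_iff[of "int p" "int w" "m - m'" "n - n'"] cop odd p_pos
    by (simp add: c c' Xi_half_point odd_pos X_point_diff_in_LambdaP_iff Xi_int_diff)
qed

lemma Xi_relX_iff_relC:
  assumes "c \<in> halfC" "c' \<in> halfC"
  shows "(Xi (2 * real p / real w) c, Xi (2 * real p / real w) c') \<in> relX w (2 * real p / real w)
     \<longleftrightarrow> (c, c') \<in> relC w"
  using assms Xi_halfC_subset_setX[OF odd] Xi_diff_in_LambdaP_iff by (auto simp: relX_def relC_def)

lemma Xi_onto_setX_mod_relX:
  assumes "x \<in> setX w"
  shows "\<exists>c\<in>halfC. (Xi (2 * real p / real w) c, x) \<in> relX w (2 * real p / real w)"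
proof -
  obtain u where x: "x = X_point w u" using assms odd by (auto simp: setX_eq_range_X_point)
  have "odd (int w)" using odd by simp
  then obtain m n where "Xi_int (int p) (int w) m n - u \<in> Lambda_int (int p) (int w)"
    using Xi_int_covers cop by blast
  then have "Xi (2 * real p / real w) (of_int m + 1/2, of_int n + 1/2) - x \<in> LambdaP (2 * real p / real w)"
    using odd by (simp add: x Xi_half_point odd_pos X_point_diff_in_LambdaP_iff)
  moreover have "(of_int m + 1/2, of_int n + 1/2) \<in> halfC" unfolding halfC_def by blast
  ultimately show ?thesis
    using assms Xi_halfC_subset_setX[OF odd] unfolding relX_def by blast
qed

end

theorem lemma3p1:
  fixes p q :: nat
  assumes "even_rational_param p q"
  defines "w \<equiv> p + q"
  defines "P \<equiv> 2 * real p / real w"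
  shows "(\<forall>c\<in>halfC. \<exists>x\<in>setX w. Xi P c - x \<in> LambdaP P)
       \<and> (\<forall>c c'. (c, c') \<in> relC w \<longrightarrow> Xi P c - Xi P c' \<in> LambdaP P)
       \<and> bij_betw (XiBar w P) (halfC // relC w) (setX w // relX w P)"
proof -
  have p_pos: "p > 0" using assms(1) by (simp add: even_rational_param_def)
  have odd: "odd w" and "coprime p w"
    using even_rational_param_odd_coprime[OF assms(1)] by (simp_all add: w_def)
  then have cop: "coprime (int p) (int w)" by simp
  have maps: "Xi P ` halfC \<subseteq> setX w"
    using Xi_halfC_subset_setX[OF odd] by (simp add: P_def)
  have "bij_betw (\<lambda>A. relX w P `` (Xi P ` A)) (halfC // relC w) (setX w // relX w P)"
    using equiv_relC equiv_relX maps Xi_relX_iff_relC[OF p_pos cop odd]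
      Xi_onto_setX_mod_relX[OF p_pos cop odd]
    unfolding P_def by (rule bij_betw_quotient_Image)
  then have "bij_betw (XiBar w P) (halfC // relC w) (setX w // relX w P)"
    unfolding P_def by (subst bij_betw_cong[OF XiBar_eq_Image[OF odd]])
  moreover have "\<forall>c\<in>halfC. \<exists>x\<in>setX w. Xi P c - x \<in> LambdaP P"
    using maps LambdaP_zero by force
  moreover have "\<forall>c c'. (c, c') \<in> relC w \<longrightarrow> Xi P c - Xi P c' \<in> LambdaP P"
    using Xi_diff_in_LambdaP_iff[OF p_pos cop odd] by (auto simp: relC_def P_def)
  ultimately show ?thesis by blast
qed

end
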